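(* Let $(G,\theta)$ be a cyclotomic $p$-oriented profinite group, let $M$ be a Hilbert 90 module for $(G,\theta)$, and fix an injective homomorphism $\iota\colon\mathbb Z/p\mathbb Z\hookrightarrow M$. Let $a,b\in M^G$ be such that $\chi_a\cup\chi_b=0$ in $H^2(G,\mathbb Z/p\mathbb Z)$. Then there exists $\alpha\in M^{G_a}$ such that $N_{G/G_a}(\alpha)=b$.
   Context: A $p$-oriented profinite group is a pair $(G,\theta)$ with $G$ profinite and $\theta\colon G\to\mathbb Z_p^\times$ continuous; it is cyclotomic if $\theta(G)\subset 1+p\mathbb Z_p$. Let $S$ be the discrete $G$-module $\mathbb Q/\mathbb Z_{(p)}$ with $g$ acting by multiplication by $\theta(g)$. A Hilbert 90 module for $(G,\theta)$ is a discrete $G$-module $M$ with $pM=M$, $M\{p\}\simeq S$ as $G$-modules, and $H^1(H,M)=0$ for every open subgroup $H\subset G$. In the cyclotomic case, the exact sequence $0\to\mathbb Z/p\mathbb Z\xrightarrow{\iota}M\xrightarrow{p}M\to0$ gives a connecting map $\partial\colon M^G\to H^1(G,\mathbb Z/p\mathbb Z)$; for $a\in M^G$ set $\chi_a=\partial(a)$ and $G_a=\ker(\chi_a)$. $N_{G/G_a}\colon M^{G_a}\to M^G$ is the norm $x\mapsto\sum_{gG_a\in G/G_a}gx$. *)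

theory Defs
  imports "HOL-Analysis.Analysis" "HOL-Algebra.Coset"
begin

definition totally_disconnected_space :: "'a topology \<Rightarrow> bool" where
  "totally_disconnected_space T \<longleftrightarrow>
     (\<forall>S. connectedin T S \<longrightarrow> S = {} \<or> (\<exists>x. S = {x}))"

definition profinite_group :: "'g monoid \<Rightarrow> 'g topology \<Rightarrow> bool" where
  "profinite_group G T \<longleftrightarrow>
     group G \<and> topspace T = carrier G \<and>
     continuous_map (prod_topology T T) T (\<lambda>(x, y). x \<otimes>\<^bsub>G\<^esub> y) \<and>
     continuous_map T T (\<lambda>x. inv\<^bsub>G\<^esub> x) \<and>
     compact_space T \<and> Hausdorff_space T \<and> totally_disconnected_space T"

definition open_subgroup :: "'g monoid \<Rightarrow> 'g topology \<Rightarrow> 'g set \<Rightarrow> bool" where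
  "open_subgroup G T H \<longleftrightarrow> subgroup H G \<and> openin T H"

text \<open>Continuity of a map from the group (or an open subgroup H of it) into a discrete set:
  all fibres are open.\<close>
definition locally_constant_on :: "'g topology \<Rightarrow> 'g set \<Rightarrow> ('g \<Rightarrow> 'x) \<Rightarrow> bool" where
  "locally_constant_on T H f \<longleftrightarrow> (\<forall>y. openin T {g \<in> H. f g = y})"

text \<open>Z_p as the inverse limit of the Z/p^n Z: compatible sequences of residues.\<close>
definition padic_int :: "nat \<Rightarrow> (nat \<Rightarrow> int) \<Rightarrow> bool" where
  "padic_int p x \<longleftrightarrow> (\<forall>n. 0 \<le> x n \<and> x n < int p ^ n) \<and>
                      (\<forall>n. x (Suc n) mod (int p ^ n) = x n)"

definition padic_unit :: "nat \<Rightarrow> (nat \<Rightarrow> int) \<Rightarrow> bool" where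
  "padic_unit p x \<longleftrightarrow> padic_int p x \<and> \<not> int p dvd x 1"

text \<open>A p-orientation: a continuous homomorphism G \<rightarrow> Z_p^\<times>. Continuity into the
  inverse-limit topology means every component g \<mapsto> \<theta> g n is locally constant.\<close>
definition p_oriented :: "'g monoid \<Rightarrow> 'g topology \<Rightarrow> nat \<Rightarrow> ('g \<Rightarrow> nat \<Rightarrow> int) \<Rightarrow> bool" where
  "p_oriented G T p \<theta> \<longleftrightarrow>
     prime p \<and> profinite_group G T \<and>
     (\<forall>g \<in> carrier G. padic_unit p (\<theta> g)) \<and>
     (\<forall>g \<in> carrier G. \<forall>h \<in> carrier G. \<forall>n.
         \<theta> (g \<otimes>\<^bsub>G\<^esub> h) n = (\<theta> g n * \<theta> h n) mod (int p ^ n)) \<and>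
     (\<forall>n. locally_constant_on T (carrier G) (\<lambda>g. \<theta> g n))"

text \<open>Cyclotomic: \<theta>(G) \<subseteq> 1 + pZ_p, i.e. \<theta>(g) \<equiv> 1 mod p.\<close>
definition cyclotomic_oriented :: "'g monoid \<Rightarrow> 'g topology \<Rightarrow> nat \<Rightarrow> ('g \<Rightarrow> nat \<Rightarrow> int) \<Rightarrow> bool" where
  "cyclotomic_oriented G T p \<theta> \<longleftrightarrow>
     p_oriented G T p \<theta> \<and> (\<forall>g \<in> carrier G. \<theta> g 1 = 1)"

text \<open>Elements of Q/Z_(p) are represented by rationals in [0,1) with p-power denominator.\<close>
definition S_set :: "nat \<Rightarrow> rat set" where
  "S_set p = {r. 0 \<le> r \<and> r < 1 \<and> (\<exists>n k. r = of_int k / of_nat (p ^ n))}"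

definition S_add :: "rat \<Rightarrow> rat \<Rightarrow> rat" where
  "S_add r s = frac (r + s)"

text \<open>g acts on k/p^n by multiplication with \<theta>(g) (only \<theta>(g) mod p^n matters).\<close>
definition S_act :: "nat \<Rightarrow> ('g \<Rightarrow> nat \<Rightarrow> int) \<Rightarrow> 'g \<Rightarrow> rat \<Rightarrow> rat" where
  "S_act p \<theta> g r =
     (let (n, k) = (SOME (n, k). r = of_int k / of_nat (p ^ n))
      in frac (of_int (\<theta> g n * k) / of_nat (p ^ n)))"

primrec nsmul :: "nat \<Rightarrow> 'm::ab_group_add \<Rightarrow> 'm" where
  "nsmul 0 x = 0"
| "nsmul (Suc n) x = x + nsmul n x"

definition discrete_G_module ::
  "'g monoid \<Rightarrow> 'g topology \<Rightarrow> ('g \<Rightarrow> 'm::ab_group_add \<Rightarrow> 'm) \<Rightarrow> bool" where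
  "discrete_G_module G T act \<longleftrightarrow>
     (\<forall>g \<in> carrier G. \<forall>x y. act g (x + y) = act g x + act g y) \<and>
     (\<forall>x. act \<one>\<^bsub>G\<^esub> x = x) \<and>
     (\<forall>g \<in> carrier G. \<forall>h \<in> carrier G. \<forall>x. act (g \<otimes>\<^bsub>G\<^esub> h) x = act g (act h x)) \<and>
     (\<forall>x. openin T {g \<in> carrier G. act g x = x})"

definition invariants :: "('g \<Rightarrow> 'm \<Rightarrow> 'm) \<Rightarrow> 'g set \<Rightarrow> 'm set" where
  "invariants act H = {x. \<forall>g \<in> H. act g x = x}"

definition p_torsion :: "nat \<Rightarrow> 'm::ab_group_add set" where
  "p_torsion p = {x. \<exists>n. nsmul (p ^ n) x = 0}"

text \<open>H^1(H, M) = 0 for continuous cochain cohomology: every continuous (locally constant)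
  crossed homomorphism H \<rightarrow> M is a coboundary.\<close>
definition H1_vanishes ::
  "'g monoid \<Rightarrow> 'g topology \<Rightarrow> ('g \<Rightarrow> 'm::ab_group_add \<Rightarrow> 'm) \<Rightarrow> 'g set \<Rightarrow> bool" where
  "H1_vanishes G T act H \<longleftrightarrow>
     (\<forall>f :: 'g \<Rightarrow> 'm.
        locally_constant_on T H f \<and>
        (\<forall>g \<in> H. \<forall>h \<in> H. f (g \<otimes>\<^bsub>G\<^esub> h) = f g + act g (f h))
        \<longrightarrow> (\<exists>m. \<forall>h \<in> H. f h = act h m - m))"

definition hilbert90_module ::
  "'g monoid \<Rightarrow> 'g topology \<Rightarrow> nat \<Rightarrow> ('g \<Rightarrow> nat \<Rightarrow> int) \<Rightarrow> ('g \<Rightarrow> 'm::ab_group_add \<Rightarrow> 'm) \<Rightarrow> bool" where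
  "hilbert90_module G T p \<theta> act \<longleftrightarrow>
     discrete_G_module G T act \<and>
     (\<forall>y::'m. \<exists>x. nsmul p x = y) \<and>
     (\<exists>\<phi> :: rat \<Rightarrow> 'm. bij_betw \<phi> (S_set p) (p_torsion p) \<and>
        (\<forall>r \<in> S_set p. \<forall>s \<in> S_set p. \<phi> (S_add r s) = \<phi> r + \<phi> s) \<and>
        (\<forall>g \<in> carrier G. \<forall>r \<in> S_set p. \<phi> (S_act p \<theta> g r) = act g (\<phi> r))) \<and>
     (\<forall>H. open_subgroup G T H \<longrightarrow> H1_vanishes G T act H)"

text \<open>An injective homomorphism Z/pZ \<rightarrow> M, given as a homomorphism Z \<rightarrow> M with kernel pZ.\<close>
definition inj_hom_Zp :: "nat \<Rightarrow> (int \<Rightarrow> 'm::ab_group_add) \<Rightarrow> bool" where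
  "inj_hom_Zp p \<iota> \<longleftrightarrow> (\<forall>k l. \<iota> (k + l) = \<iota> k + \<iota> l) \<and> (\<forall>k. \<iota> k = 0 \<longleftrightarrow> int p dvd k)"

text \<open>The connecting map \<partial>: M^G \<rightarrow> H^1(G, Z/p) = Hom(G, Z/p) (trivial action in the
  cyclotomic case): \<chi>_a(g) = \<iota>^{-1}(g x - x) for any x with p x = a; values in {0..p-1}.\<close>
definition kummer_char ::
  "nat \<Rightarrow> ('g \<Rightarrow> 'm::ab_group_add \<Rightarrow> 'm) \<Rightarrow> (int \<Rightarrow> 'm) \<Rightarrow> 'm \<Rightarrow> 'g \<Rightarrow> int" where
  "kummer_char p act \<iota> a g =
     (let x = (SOME x. nsmul p x = a) in THE k. 0 \<le> k \<and> k < int p \<and> \<iota> k = act g x - x)"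

definition kummer_kernel ::
  "'g monoid \<Rightarrow> nat \<Rightarrow> ('g \<Rightarrow> 'm::ab_group_add \<Rightarrow> 'm) \<Rightarrow> (int \<Rightarrow> 'm) \<Rightarrow> 'm \<Rightarrow> 'g set" where
  "kummer_kernel G p act \<iota> a = {g \<in> carrier G. kummer_char p act \<iota> a g = 0}"

text \<open>\<chi> \<union> \<psi> = 0 in H^2(G, Z/p) (trivial action): the 2-cocycle (g,h) \<mapsto> \<chi>(g)\<psi>(h) is the
  coboundary of a continuous 1-cochain c : G \<rightarrow> Z/p.\<close>
definition cup_vanishes ::
  "'g monoid \<Rightarrow> 'g topology \<Rightarrow> nat \<Rightarrow> ('g \<Rightarrow> int) \<Rightarrow> ('g \<Rightarrow> int) \<Rightarrow> bool" where
  "cup_vanishes G T p chi psi \<longleftrightarrow>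
     (\<exists>c :: 'g \<Rightarrow> int. locally_constant_on T (carrier G) (\<lambda>g. c g mod int p) \<and>
        (\<forall>g \<in> carrier G. \<forall>h \<in> carrier G.
           (chi g * psi h) mod int p = (c h - c (g \<otimes>\<^bsub>G\<^esub> h) + c g) mod int p))"

text \<open>Norm N_{G/H}: x \<mapsto> \<Sum>_{gH \<in> G/H} g x (H normal, so left and right cosets agree).\<close>
definition norm_map ::
  "'g monoid \<Rightarrow> 'g set \<Rightarrow> ('g \<Rightarrow> 'm::ab_group_add \<Rightarrow> 'm) \<Rightarrow> 'm \<Rightarrow> 'm" where
  "norm_map G H act x = (\<Sum>C \<in> rcosets\<^bsub>G\<^esub> H. act (SOME g. g \<in> C) x)"

end

theory Submission
  imports Defs "HOL-Number_Theory.Cong"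
begin

text \<open>Let chi and psi be the Kummer characters of a and b, with values in {0..p-1}, and let
  H = ker chi, the stabiliser of a p-th root of a (hence an open subgroup). A cochain c with
  coboundary chi \<union> psi is a homomorphism H \<rightarrow> Z/p, which by Hilbert 90 (mu_p being fixed by G)
  is h \<mapsto> h m - m. With y a p-th root of b, the cochain
  W g = chi(g) y + iota(c g + chi(g) psi(g)) - (g m - m) vanishes on H, and its coboundary is the
  carry cocycle (g, h) \<mapsto> [chi g + chi h \<ge> p] b. For sigma with chi sigma = 1 the element
  alpha = W sigma is then H-invariant and its norm sum_{k<p} sigma^k alpha telescopes to b.\<close>

lemma nsmul_add_left: "nsmul (m + n) x = nsmul m x + nsmul n (x::'m::ab_group_add)"
  by (induction m) (auto simp: algebra_simps)

lemma nsmul_add_right: "nsmul n (x + y) = nsmul n x + nsmul n (y::'m::ab_group_add)"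
  by (induction n) (auto simp: algebra_simps)

lemma nsmul_diff_right: "nsmul n (x - y) = nsmul n x - nsmul n (y::'m::ab_group_add)"
  by (induction n) (simp_all add: algebra_simps)

section \<open>Characters with values in Z/n\<close>

lemma mod_add_eq_self_imp_zero:
  fixes c k m :: int
  assumes "0 \<le> k" "k < m" "(c + k) mod m = c mod m"
  shows "k = 0"
proof -
  have "m dvd k" using assms(3) by (simp add: mod_eq_dvd_iff)
  then show ?thesis using assms(1,2) zdvd_not_zless[of k m] by (metis order_le_less)
qed

lemma mod_add_if_range:
  fixes x y n :: int
  assumes "0 \<le> x" "x < n" "0 \<le> y" "y < n"
  shows "(x + y) mod n = (if n \<le> x + y then x + y - n else x + y)"
proof (cases "n \<le> x + y")
  case True
  have "(x + y) mod n = (x + y - n + 1 * n) mod n" by simp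
  also have "\<dots> = x + y - n" using True assms by (simp only: mod_mult_self1 mod_pos_pos_trivial)
  finally show ?thesis using True by simp
qed (use assms in simp)

text \<open>The cochain g \<mapsto> c g + chi g psi g has coboundary (g, h) \<mapsto> chi h psi g mod m
  whenever c has coboundary chi \<union> psi.\<close>
lemma dvd_cup_coboundary:
  fixes chi_g chi_h chi_gh psi_g psi_h psi_gh c_g c_h c_gh m :: int
  assumes "chi_gh = (chi_g + chi_h) mod m" "psi_gh = (psi_g + psi_h) mod m"
    and "(chi_g * psi_h) mod m = (c_h - c_gh + c_g) mod m"
  shows "m dvd (c_gh + chi_gh * psi_gh) - (chi_h * psi_g + (c_h + chi_h * psi_h) + (c_g + chi_g * psi_g))"
proof -
  obtain q1 where q1: "chi_gh = chi_g + chi_h - m * q1"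
    using assms(1) by (metis minus_mult_div_eq_mod mult.commute)
  obtain q2 where q2: "psi_gh = psi_g + psi_h - m * q2"
    using assms(2) by (metis minus_mult_div_eq_mod mult.commute)
  obtain q3 where "chi_g * psi_h - (c_h - c_gh + c_g) = m * q3"
    using assms(3) by (metis mod_eq_dvd_iff dvdE)
  then have c_gh: "c_gh = c_h + c_g - chi_g * psi_h + m * q3" by simp
  have "(c_gh + chi_gh * psi_gh) - (chi_h * psi_g + (c_h + chi_h * psi_h) + (c_g + chi_g * psi_g))
          = m * (m * q1 * q2 - q1 * (psi_g + psi_h) - q2 * (chi_g + chi_h) + q3)"
    unfolding q1 q2 c_gh by (simp add: algebra_simps)
  then show ?thesis by simp
qed

locale zmod_character = group G for G :: "'g monoid" (structure) +
  fixes n :: nat and chi :: "'g \<Rightarrow> int"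
  assumes chi_range: "g \<in> carrier G \<Longrightarrow> 0 \<le> chi g \<and> chi g < int n"
    and chi_mult: "\<lbrakk>g \<in> carrier G; h \<in> carrier G\<rbrakk> \<Longrightarrow> chi (g \<otimes> h) = (chi g + chi h) mod int n"
begin

definition chi_kernel :: "'g set" where
  "chi_kernel = {g \<in> carrier G. chi g = 0}"

lemma chi_mult_eq_left_iff:
  assumes "g \<in> carrier G" "h \<in> carrier G"
  shows "chi (h \<otimes> g) = chi g \<longleftrightarrow> chi h = 0"
  using chi_mult[OF assms(2,1)] chi_range[OF assms(1)] chi_range[OF assms(2)]
    mod_add_eq_self_imp_zero[of "chi h" n "chi g"] by (auto simp: add.commute)

lemma chi_mult_eq_right_iff:
  assumes "g \<in> carrier G" "h \<in> carrier G"
  shows "chi (g \<otimes> h) = chi g \<longleftrightarrow> chi h = 0"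
  using chi_mult[OF assms] chi_range[OF assms(1)] chi_range[OF assms(2)]
    mod_add_eq_self_imp_zero[of "chi h" n "chi g"] by auto

lemma chi_one [simp]: "chi \<one> = 0"
  using chi_mult_eq_right_iff[of \<one> \<one>] by simp

lemma chi_kernel_subgroup: "subgroup chi_kernel G"
proof (rule subgroupI)
  fix x assume "x \<in> chi_kernel"
  then show "inv x \<in> chi_kernel"
    using chi_mult_eq_left_iff[of x "inv x"] by (simp add: chi_kernel_def)
next
  fix x y assume "x \<in> chi_kernel" "y \<in> chi_kernel"
  then show "x \<otimes> y \<in> chi_kernel"
    using chi_mult_eq_left_iff[of y x] by (simp add: chi_kernel_def)
qed (use chi_one in \<open>auto simp: chi_kernel_def\<close>)

lemma chi_eq_iff_inv_mult_in_kernel: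
  assumes "g \<in> carrier G" "h \<in> carrier G"
  shows "chi g = chi h \<longleftrightarrow> inv g \<otimes> h \<in> chi_kernel"
proof -
  have "g \<otimes> (inv g \<otimes> h) = h" using assms by (simp add: m_assoc[symmetric])
  then show ?thesis
    using chi_mult_eq_right_iff[of g "inv g \<otimes> h"] assms by (auto simp: chi_kernel_def)
qed

lemma rcoset_chi_kernel:
  assumes g: "g \<in> carrier G"
  shows "chi_kernel #> g = {x \<in> carrier G. chi x = chi g}"
proof -
  have "x \<in> chi_kernel #> g \<longleftrightarrow> chi x = chi g" if x: "x \<in> carrier G" for x
  proof -
    have "(x \<otimes> inv g) \<otimes> g = x" using x g by (simp add: m_assoc)
    then show ?thesis
      using subgroup.rcos_module[OF chi_kernel_subgroup is_group g x]
        chi_mult_eq_left_iff[of g "x \<otimes> inv g"] x g by (auto simp: chi_kernel_def)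
  qed
  moreover have "chi_kernel #> g \<subseteq> carrier G"
    using g chi_kernel_subgroup by (simp add: r_coset_subset_G subgroup.subset)
  ultimately show ?thesis by blast
qed

lemma chi_pow: "g \<in> carrier G \<Longrightarrow> chi (g [^] k) = (int k * chi g) mod int n"
proof (induction k)
  case (Suc k)
  then show ?case
    by (simp add: chi_mult mod_add_left_eq mod_add_right_eq algebra_simps)
qed simp

lemma exists_chi_eq_one:
  assumes "prime n" "g \<in> carrier G" "chi g \<noteq> 0"
  shows "\<exists>\<sigma> \<in> carrier G. chi \<sigma> = 1"
proof -
  have "\<not> int n dvd chi g"
    using chi_range[OF assms(2)] assms(3) zdvd_not_zless by fastforce
  then have "coprime (chi g) (int n)"
    using assms(1) by (simp add: prime_imp_coprime coprime_commute)
  then obtain u where "[chi g * u = 1] (mod int n)" using cong_solve_coprime_int by blast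
  define s where "s = nat (u mod int n)"
  have "int s = u mod int n" using prime_gt_1_nat[OF assms(1)] by (simp add: s_def)
  then have "chi (g [^] s) = (chi g * u) mod int n"
    using chi_pow[OF assms(2), of s] by (simp add: mod_mult_left_eq mult.commute[of u])
  also have "\<dots> = 1"
    using \<open>[chi g * u = 1] (mod int n)\<close> prime_gt_1_nat[OF assms(1)] by (simp add: cong_def)
  finally show ?thesis using assms(2) by blast
qed

lemma chi_pow_of_generator:
  assumes "\<sigma> \<in> carrier G" "chi \<sigma> = 1" "k < n"
  shows "chi (\<sigma> [^] k) = int k"
  using chi_pow[OF assms(1)] assms(2,3) by simp

lemma rcosets_chi_kernel:
  assumes \<sigma>: "\<sigma> \<in> carrier G" "chi \<sigma> = 1"
  shows "rcosets chi_kernel = (\<lambda>k. {x \<in> carrier G. chi x = int k}) ` {..<n}"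
proof -
  have "{x \<in> carrier G. chi x = chi g} \<in> (\<lambda>k. {x \<in> carrier G. chi x = int k}) ` {..<n}"
    if "g \<in> carrier G" for g
    using chi_range[OF that] by (intro image_eqI[of _ _ "nat (chi g)"]) auto
  moreover have "{x \<in> carrier G. chi x = int k} = chi_kernel #> \<sigma> [^] k" if "k < n" for k
    using rcoset_chi_kernel[of "\<sigma> [^] k"] chi_pow_of_generator[OF \<sigma> that] \<sigma> by simp
  ultimately show ?thesis
    unfolding RCOSETS_def using rcoset_chi_kernel \<sigma>(1) by fastforce
qed

lemma nsmul_chi_mult:
  assumes g: "g \<in> carrier G" and h: "h \<in> carrier G"
  shows "nsmul (nat (chi g)) y + nsmul (nat (chi h)) y
           = nsmul (nat (chi (g \<otimes> h))) y + (if int n \<le> chi g + chi h then nsmul n y else 0)"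
proof -
  have "nat (chi g) + nat (chi h) = nat (chi (g \<otimes> h)) + (if int n \<le> chi g + chi h then n else 0)"
    using chi_mult[OF g h] chi_range[OF g] chi_range[OF h] mod_add_if_range[of "chi g" "int n" "chi h"]
    by auto
  then show ?thesis by (auto simp flip: nsmul_add_left)
qed

end

section \<open>Norms and the carry cocycle\<close>

locale G_action = group G for G :: "'g monoid" (structure) +
  fixes act :: "'g \<Rightarrow> 'm::ab_group_add \<Rightarrow> 'm"
  assumes act_add: "g \<in> carrier G \<Longrightarrow> act g (x + y) = act g x + act g y"
    and act_one: "act \<one> x = x"
    and act_mult: "\<lbrakk>g \<in> carrier G; h \<in> carrier G\<rbrakk> \<Longrightarrow> act (g \<otimes> h) x = act g (act h x)"
begin

lemma act_zero: "g \<in> carrier G \<Longrightarrow> act g 0 = 0"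
  using act_add[of g 0 0] by simp

lemma act_diff: "g \<in> carrier G \<Longrightarrow> act g (x - y) = act g x - act g y"
  using act_add[of g "x - y" y] by (simp add: algebra_simps)

lemma act_nsmul: "g \<in> carrier G \<Longrightarrow> act g (nsmul k x) = nsmul k (act g x)"
  by (induction k) (simp_all add: act_zero act_add)

lemma act_sum: "g \<in> carrier G \<Longrightarrow> act g (\<Sum>i\<in>A. f i) = (\<Sum>i\<in>A. act g (f i))"
  by (induction A rule: infinite_finite_induct) (simp_all add: act_zero act_add)

lemma sum_act_pow_Suc:
  assumes "\<sigma> \<in> carrier G"
  shows "(\<Sum>i<Suc k. act (\<sigma> [^] i) x) = act \<sigma> (\<Sum>i<k. act (\<sigma> [^] i) x) + x"
proof -
  have "act (\<sigma> [^] i \<otimes> \<sigma>) x = act \<sigma> (act (\<sigma> [^] i) x)" for i :: nat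
  proof -
    have "\<sigma> [^] i \<otimes> \<sigma> = \<sigma> \<otimes> \<sigma> [^] i" using nat_pow_Suc2[OF assms, of i] by simp
    then show ?thesis using act_mult[OF assms nat_pow_closed[OF assms]] by simp
  qed
  then have "(\<Sum>i<k. act (\<sigma> [^] Suc i) x) = act \<sigma> (\<Sum>i<k. act (\<sigma> [^] i) x)"
    by (simp add: act_sum[OF assms])
  then show ?thesis by (simp only: sum.lessThan_Suc_shift) (simp add: act_one add.commute)
qed

lemma norm_map_carrier:
  assumes "b \<in> invariants act (carrier G)"
  shows "norm_map G (carrier G) act b = b"
proof -
  have "rcosets (carrier G) = {carrier G}"
    using subgroup.rcos_const[OF subgroup_self is_group] unfolding RCOSETS_def by auto
  then show ?thesis
    using assms someI[of "\<lambda>g. g \<in> carrier G", OF one_closed]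
    by (simp add: norm_map_def invariants_def)
qed

end

text \<open>The 2-cocycle (g, h) \<mapsto> [chi g + chi h \<ge> n] b is the carry produced by adding values of chi
  in {0..n-1}; here W is a 1-cochain trivializing it that vanishes on the kernel of chi.\<close>
definition carry_trivialization ::
  "'g monoid \<Rightarrow> nat \<Rightarrow> ('g \<Rightarrow> int) \<Rightarrow> ('g \<Rightarrow> 'm::ab_group_add \<Rightarrow> 'm) \<Rightarrow> ('g \<Rightarrow> 'm) \<Rightarrow> 'm \<Rightarrow> bool"
  where
  "carry_trivialization G n chi act W b \<longleftrightarrow>
     (\<forall>h \<in> carrier G. chi h = 0 \<longrightarrow> W h = 0) \<and>
     (\<forall>g \<in> carrier G. \<forall>h \<in> carrier G.
        W (g \<otimes>\<^bsub>G\<^esub> h) = act g (W h) + W g - (if int n \<le> chi g + chi h then b else 0))"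

locale zmod_character_action = zmod_character G n chi + G_action G act
  for G :: "'g monoid" (structure) and n chi and act :: "'g \<Rightarrow> 'm::ab_group_add \<Rightarrow> 'm"
begin

lemma act_eq_on_fibres:
  assumes "\<alpha> \<in> invariants act chi_kernel" "g \<in> carrier G" "h \<in> carrier G" "chi g = chi h"
  shows "act g \<alpha> = act h \<alpha>"
proof -
  have k: "inv g \<otimes> h \<in> chi_kernel"
    using assms(2-4) chi_eq_iff_inv_mult_in_kernel by blast
  then have "act h \<alpha> = act g (act (inv g \<otimes> h) \<alpha>)"
    using assms(2,3) act_mult[of g "inv g \<otimes> h" \<alpha>] by (simp add: m_assoc[symmetric])
  then show ?thesis using assms(1) k by (simp add: invariants_def)
qed

lemma norm_map_chi_kernel:
  assumes \<sigma>: "\<sigma> \<in> carrier G" "chi \<sigma> = 1" and \<alpha>: "\<alpha> \<in> invariants act chi_kernel"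
  shows "norm_map G chi_kernel act \<alpha> = (\<Sum>k<n. act (\<sigma> [^] k) \<alpha>)"
proof -
  define fibre where "fibre k = {x \<in> carrier G. chi x = int k}" for k :: nat
  have pow_in_fibre: "\<sigma> [^] k \<in> fibre k" if "k < n" for k
    using chi_pow_of_generator[OF \<sigma> that] \<sigma> by (simp add: fibre_def)
  have "inj_on fibre {..<n}"
  proof (rule inj_onI)
    fix k l assume kl: "k \<in> {..<n}" "l \<in> {..<n}" "fibre k = fibre l"
    then have "\<sigma> [^] k \<in> fibre l" using pow_in_fibre[of k] by simp
    then show "k = l" using pow_in_fibre[of k] kl(1) by (simp add: fibre_def)
  qed
  moreover have "rcosets chi_kernel = fibre ` {..<n}"
    unfolding fibre_def by (rule rcosets_chi_kernel[OF \<sigma>])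
  ultimately have "norm_map G chi_kernel act \<alpha> = (\<Sum>k<n. act (SOME g. g \<in> fibre k) \<alpha>)"
    unfolding norm_map_def using sum.reindex[of fibre "{..<n}" "\<lambda>C. act (SOME g. g \<in> C) \<alpha>"]
    by (simp only: comp_def)
  also have "\<dots> = (\<Sum>k<n. act (\<sigma> [^] k) \<alpha>)"
  proof (rule sum.cong[OF refl])
    fix k assume "k \<in> {..<n}"
    then have "\<sigma> [^] k \<in> fibre k" "(SOME g. g \<in> fibre k) \<in> fibre k"
      using pow_in_fibre someI[of "\<lambda>g. g \<in> fibre k"] by auto
    then show "act (SOME g. g \<in> fibre k) \<alpha> = act (\<sigma> [^] k) \<alpha>"
      using act_eq_on_fibres[OF \<alpha>] by (simp add: fibre_def)
  qed
  finally show ?thesis .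
qed

context
  fixes W :: "'g \<Rightarrow> 'm" and b :: 'm
  assumes W: "carry_trivialization G n chi act W b"
begin

lemma carry_trivialization_kernel: "\<lbrakk>h \<in> carrier G; chi h = 0\<rbrakk> \<Longrightarrow> W h = 0"
  using W unfolding carry_trivialization_def by blast

lemma carry_trivialization_mult:
  "\<lbrakk>g \<in> carrier G; h \<in> carrier G\<rbrakk> \<Longrightarrow>
     W (g \<otimes> h) = act g (W h) + W g - (if int n \<le> chi g + chi h then b else 0)"
  using W unfolding carry_trivialization_def by blast

lemma carry_trivialization_eq_on_fibres:
  assumes g: "g \<in> carrier G" and h: "h \<in> carrier G" and "chi g = chi h"
  shows "W g = W h"
proof -
  define k where "k = inv g \<otimes> h"
  have k: "k \<in> carrier G" "chi k = 0"
    using chi_eq_iff_inv_mult_in_kernel[OF g h] \<open>chi g = chi h\<close> by (auto simp: k_def chi_kernel_def)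
  have "g \<otimes> k = h" using g h by (simp add: k_def m_assoc[symmetric])
  then have "W h = act g (W k) + W g"
    using carry_trivialization_mult[OF g k(1)] k chi_range[OF g] by simp
  then show ?thesis using carry_trivialization_kernel[OF k] act_zero[OF g] by simp
qed

lemma carry_trivialization_invariant:
  assumes g: "g \<in> carrier G"
  shows "W g \<in> invariants act chi_kernel"
proof -
  have "act h (W g) = W g" if "h \<in> chi_kernel" for h
  proof -
    have h: "h \<in> carrier G" "chi h = 0" using that by (auto simp: chi_kernel_def)
    have "W (h \<otimes> g) = act h (W g)"
      using carry_trivialization_mult[OF h(1) g] carry_trivialization_kernel[OF h] h(2) chi_range[OF g]
      by simp
    moreover have "W (h \<otimes> g) = W g"
      using carry_trivialization_eq_on_fibres[of "h \<otimes> g" g] chi_mult_eq_left_iff[OF g h(1)] h g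
      by simp
    ultimately show ?thesis by simp
  qed
  then show ?thesis by (simp add: invariants_def)
qed

lemma carry_trivialization_pow:
  assumes \<sigma>: "\<sigma> \<in> carrier G" "chi \<sigma> = 1"
  shows "k < n \<Longrightarrow> W (\<sigma> [^] k) = (\<Sum>i<k. act (\<sigma> [^] i) (W \<sigma>))"
proof (induction k)
  case 0
  then show ?case using carry_trivialization_kernel[of \<one>] by simp
next
  case (Suc k)
  have "W (\<sigma> \<otimes> \<sigma> [^] k) = act \<sigma> (W (\<sigma> [^] k)) + W \<sigma>"
    using carry_trivialization_mult[OF \<sigma>(1) nat_pow_closed[OF \<sigma>(1)], of k]
      chi_pow_of_generator[OF \<sigma>, of k] Suc.prems \<sigma>(2) by simp
  then have "W (\<sigma> [^] Suc k) = act \<sigma> (W (\<sigma> [^] k)) + W \<sigma>"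
    by (simp only: nat_pow_Suc2[OF \<sigma>(1)])
  then show ?case using Suc sum_act_pow_Suc[OF \<sigma>(1)] by simp
qed

lemma norm_of_carry_trivialization:
  assumes \<sigma>: "\<sigma> \<in> carrier G" "chi \<sigma> = 1"
  shows "(\<Sum>k<n. act (\<sigma> [^] k) (W \<sigma>)) = b"
proof -
  have n: "Suc (n - 1) = n" using chi_range[OF \<sigma>(1)] \<sigma>(2) by simp
  have "W (\<sigma> [^] n) = 0"
    using carry_trivialization_kernel[of "\<sigma> [^] n"] chi_pow[OF \<sigma>(1), of n] \<sigma> by simp
  moreover have "W (\<sigma> \<otimes> \<sigma> [^] (n - 1)) = act \<sigma> (W (\<sigma> [^] (n - 1))) + W \<sigma> - b"
    using carry_trivialization_mult[OF \<sigma>(1) nat_pow_closed[OF \<sigma>(1)], of "n - 1"]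
      chi_pow_of_generator[OF \<sigma>, of "n - 1"] \<sigma>(2) n by simp
  moreover have "\<sigma> \<otimes> \<sigma> [^] (n - 1) = \<sigma> [^] n"
    using nat_pow_Suc2[OF \<sigma>(1), of "n - 1"] n by simp
  ultimately have "b = act \<sigma> (W (\<sigma> [^] (n - 1))) + W \<sigma>"
    by (simp add: algebra_simps)
  also have "\<dots> = (\<Sum>k<n. act (\<sigma> [^] k) (W \<sigma>))"
    using carry_trivialization_pow[OF \<sigma>, of "n - 1"] sum_act_pow_Suc[OF \<sigma>(1), where k = "n - 1"] n
    by simp
  finally show ?thesis by simp
qed

end

end

section \<open>The p-torsion of Q/Z_(p)\<close>

lemma padic_int_mod:
  assumes "padic_int p x" "m \<le> n"
  shows "x n mod (int p ^ m) = x m"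
  using assms(2)
proof (induction n)
  case 0
  have "0 \<le> x 0" "x 0 < 1" using assms(1) unfolding padic_int_def by (metis power_0)+
  with 0 show ?case by simp
next
  case (Suc n)
  show ?case
  proof (cases "m = Suc n")
    case True
    have "0 \<le> x (Suc n)" "x (Suc n) < int p ^ Suc n"
      using assms(1) unfolding padic_int_def by blast+
    then show ?thesis using True by (simp only: mod_pos_pos_trivial)
  next
    case False
    then have "m \<le> n" using Suc.prems by simp
    then have "x (Suc n) mod (int p ^ m) = (x (Suc n) mod (int p ^ n)) mod (int p ^ m)"
      by (simp add: mod_mod_cancel le_imp_power_dvd)
    also have "\<dots> = x m" using Suc.IH \<open>m \<le> n\<close> assms(1) by (simp add: padic_int_def)
    finally show ?thesis .
  qed
qed

lemma frac_in_S_set: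
  assumes "p > 0"
  shows "frac (of_int k / of_nat (p ^ n) :: rat) \<in> S_set p"
proof -
  let ?x = "of_int k / of_nat (p ^ n) :: rat"
  have "frac ?x = of_int (k - \<lfloor>?x\<rfloor> * int (p ^ n)) / of_nat (p ^ n)"
    using assms by (simp add: frac_def field_simps)
  then show ?thesis unfolding S_set_def using frac_ge_0 frac_lt_1 by blast
qed

lemma frac_mult_in_S_set:
  assumes "p > 0" "r \<in> S_set p"
  shows "frac (of_nat m * r) \<in> S_set p"
proof -
  obtain n k where "r = of_int k / of_nat (p ^ n)" using assms(2) by (auto simp: S_set_def)
  then have "of_nat m * r = of_int (int m * k) / of_nat (p ^ n)" by simp
  then show ?thesis using frac_in_S_set[OF assms(1)] by metis
qed

lemma frac_add_frac: "frac (r + frac s) = frac (r + s :: rat)"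
proof -
  have "r + frac s = (r + s) + of_int (- \<lfloor>s\<rfloor>)" by (simp add: frac_def)
  then show ?thesis by (simp only: frac_add_of_int_right)
qed

text \<open>An element j/p of order p is fixed by g whenever theta g = 1 mod p: multiplying j/p
  by 1 + p t changes it by the integer j t.\<close>
lemma S_act_fixes_order_p:
  assumes p: "p > 0" and \<theta>: "padic_int p (\<theta> g)" "\<theta> g 1 = 1" and j: "j < p"
  shows "S_act p \<theta> g (of_nat j / of_nat p) = of_nat j / of_nat p"
proof -
  define r :: rat where "r = of_nat j / of_nat p"
  have r01: "0 \<le> r" "r < 1" using j by (auto simp: r_def)
  obtain n k where nk: "(SOME (n, k). r = of_int k / of_nat (p ^ n)) = (n, k)"
    by (metis surj_pair)
  have "\<exists>nk. (\<lambda>(n, k). r = of_int k / of_nat (p ^ n)) nk"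
    by (rule exI[of _ "(1, int j)"]) (simp add: r_def)
  from someI_ex[OF this] have rk: "r = of_int k / of_nat (p ^ n)" using nk by simp
  have "frac (of_int (\<theta> g n * k) / of_nat (p ^ n) :: rat) = r"
  proof (cases "n = 0")
    case True
    then have "k = 0" using rk r01 by simp
    then show ?thesis using rk by simp
  next
    case False
    have "\<theta> g n mod int p = 1"
      using padic_int_mod[OF \<theta>(1), of 1 n] False \<theta>(2) by simp
    then obtain t where t: "\<theta> g n = 1 + int p * t"
      by (metis mod_mult_div_eq add.commute)
    have "of_int k * of_nat p = of_nat j * (of_nat (p ^ n) :: rat)"
      using rk p unfolding r_def by (simp add: field_simps)
    then have "of_int (\<theta> g n * k) / of_nat (p ^ n) = r + of_int (t * int j)"
      using p unfolding rk t by (simp add: field_simps)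
    moreover have "frac (r + of_int (t * int j)) = r"
      using r01 by (simp only: frac_add_of_int_right frac_eq)
    ultimately show ?thesis by (simp only:)
  qed
  then show ?thesis unfolding S_act_def nk r_def[symmetric] by simp
qed

locale p_torsion_parametrization =
  fixes p :: nat and \<phi> :: "rat \<Rightarrow> 'm::ab_group_add"
  assumes p_pos: "p > 0"
    and bij: "bij_betw \<phi> (S_set p) (p_torsion p)"
    and add: "\<lbrakk>r \<in> S_set p; s \<in> S_set p\<rbrakk> \<Longrightarrow> \<phi> (S_add r s) = \<phi> r + \<phi> s"
begin

lemma zero_in_S_set: "0 \<in> S_set p"
  unfolding S_set_def by (auto intro!: exI[of _ 0])

lemma param_zero: "\<phi> 0 = 0"
  using add[OF zero_in_S_set zero_in_S_set] by (simp add: S_add_def)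

lemma param_nsmul: "r \<in> S_set p \<Longrightarrow> nsmul m (\<phi> r) = \<phi> (frac (of_nat m * r))"
proof (induction m)
  case 0
  then show ?case by (simp add: param_zero)
next
  case (Suc m)
  have "nsmul (Suc m) (\<phi> r) = \<phi> (S_add r (frac (of_nat m * r)))"
    using Suc add[OF Suc.prems frac_mult_in_S_set[OF p_pos Suc.prems]] by simp
  then show ?case by (simp add: S_add_def frac_add_frac algebra_simps)
qed

lemma killed_by_p_eq_param:
  assumes z: "nsmul p z = 0"
  shows "\<exists>j<p. z = \<phi> (of_nat j / of_nat p)"
proof -
  have "z \<in> p_torsion p" using z unfolding p_torsion_def by (auto intro!: exI[of _ 1])
  then obtain r where r: "r \<in> S_set p" "z = \<phi> r"
    using bij by (metis bij_betw_imp_surj_on imageE)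
  have "\<phi> (frac (of_nat p * r)) = \<phi> 0" using param_nsmul[OF r(1), of p] z r param_zero by simp
  then have "frac (of_nat p * r) = 0"
    using bij frac_mult_in_S_set[OF p_pos r(1)] zero_in_S_set unfolding bij_betw_def inj_on_def by blast
  then obtain j :: int where j: "of_nat p * r = of_int j" by (metis frac_eq_0_iff Ints_cases)
  have r01: "0 \<le> r" "r < 1" using r(1) by (auto simp: S_set_def)
  then have "(0::rat) \<le> of_int j" "of_int j < (of_nat p :: rat)"
    using j p_pos mult_strict_left_mono[of r 1 "of_nat p"] by (simp_all flip: j)
  then have "0 \<le> j" "j < int p" by simp_all
  moreover have "r = of_nat (nat j) / of_nat p" using j p_pos \<open>0 \<le> j\<close> by (simp add: field_simps)
  ultimately show ?thesis using r(2) by (intro exI[of _ "nat j"]) auto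
qed

end

section \<open>Kummer theory in a Hilbert 90 module\<close>

locale Zp_embedding =
  fixes p :: nat and \<iota> :: "int \<Rightarrow> 'm::ab_group_add"
  assumes inj_hom: "inj_hom_Zp p \<iota>"
begin

lemma iota_add: "\<iota> (k + l) = \<iota> k + \<iota> l"
  using inj_hom by (simp add: inj_hom_Zp_def)

lemma iota_eq_0_iff: "\<iota> k = 0 \<longleftrightarrow> int p dvd k"
  using inj_hom by (simp add: inj_hom_Zp_def)

lemma iota_0 [simp]: "\<iota> 0 = 0"
  by (simp add: iota_eq_0_iff)

lemma iota_diff: "\<iota> (k - l) = \<iota> k - \<iota> l"
  using iota_add[of "k - l" l] by (simp add: eq_diff_eq)

lemma iota_eq_iff: "\<iota> k = \<iota> l \<longleftrightarrow> int p dvd k - l"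
  by (metis iota_diff iota_eq_0_iff right_minus_eq)

lemma iota_mod: "\<iota> (k mod int p) = \<iota> k"
  by (simp add: iota_eq_iff mod_eq_dvd_iff[symmetric])

lemma iota_nsmul: "nsmul n (\<iota> k) = \<iota> (int n * k)"
  by (induction n) (simp_all add: iota_add algebra_simps)

lemma iota_inj_on: "inj_on \<iota> {0..<int p}"
proof (rule inj_onI)
  fix k l assume kl: "k \<in> {0..<int p}" "l \<in> {0..<int p}" "\<iota> k = \<iota> l"
  then have "k mod int p = l mod int p" by (simp only: iota_eq_iff mod_eq_dvd_iff)
  moreover have "k mod int p = k" "l mod int p = l"
    using kl(1,2) by (simp_all add: mod_pos_pos_trivial)
  ultimately show "k = l" by simp
qed

end

locale cyclotomic_hilbert90 =
  fixes G :: "'g monoid" (structure) and T :: "'g topology" and p :: nat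
    and \<theta> :: "'g \<Rightarrow> nat \<Rightarrow> int" and act :: "'g \<Rightarrow> 'm::ab_group_add \<Rightarrow> 'm"
    and \<iota> :: "int \<Rightarrow> 'm"
  assumes cyclotomic: "cyclotomic_oriented G T p \<theta>"
    and hilbert90: "hilbert90_module G T p \<theta> act"
    and embedding: "inj_hom_Zp p \<iota>"
begin

lemma prime_p: "prime p"
  using cyclotomic by (simp add: cyclotomic_oriented_def p_oriented_def)

lemma p_gt_1: "p > 1"
  using prime_p prime_gt_1_nat by blast

lemma group_G: "group G"
  using cyclotomic by (simp add: cyclotomic_oriented_def p_oriented_def profinite_group_def)

lemma G_module: "discrete_G_module G T act"
  using hilbert90 by (simp add: hilbert90_module_def)

sublocale G_action G act
  using group_G G_module
  by (intro G_action.intro G_action_axioms.intro) (simp_all add: discrete_G_module_def)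

sublocale Zp_embedding p \<iota>
  by (rule Zp_embedding.intro[OF embedding])

lemma p_divisible: "\<exists>x. nsmul p x = (y :: 'm)"
  using hilbert90 unfolding hilbert90_module_def by blast

lemma stabilizer_open: "openin T {g \<in> carrier G. act g x = x}"
  using G_module by (simp add: discrete_G_module_def)

lemma killed_by_p_parametrized:
  "\<exists>f. (\<forall>z. nsmul p z = 0 \<longrightarrow> (\<exists>j<p. z = f j)) \<and> (\<forall>g \<in> carrier G. \<forall>j<p. act g (f j) = f j)"
proof -
  have "\<exists>\<phi> :: rat \<Rightarrow> 'm. bij_betw \<phi> (S_set p) (p_torsion p) \<and>
      (\<forall>r \<in> S_set p. \<forall>s \<in> S_set p. \<phi> (S_add r s) = \<phi> r + \<phi> s) \<and>
      (\<forall>g \<in> carrier G. \<forall>r \<in> S_set p. \<phi> (S_act p \<theta> g r) = act g (\<phi> r))"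
    using hilbert90 by (simp add: hilbert90_module_def)
  then obtain \<phi> :: "rat \<Rightarrow> 'm" where \<phi>: "bij_betw \<phi> (S_set p) (p_torsion p)"
    "\<forall>r \<in> S_set p. \<forall>s \<in> S_set p. \<phi> (S_add r s) = \<phi> r + \<phi> s"
    "\<forall>g \<in> carrier G. \<forall>r \<in> S_set p. \<phi> (S_act p \<theta> g r) = act g (\<phi> r)"
    by blast
  interpret p_torsion_parametrization p \<phi>
    using \<phi>(1,2) p_gt_1 unfolding p_torsion_parametrization_def by simp
  have "act g (\<phi> (of_nat j / of_nat p)) = \<phi> (of_nat j / of_nat p)"
    if "g \<in> carrier G" "j < p" for g j
  proof -
    have "of_nat j / of_nat p \<in> S_set p"
      unfolding S_set_def using that(2) by (auto intro!: exI[of _ 1] exI[of _ "int j"])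
    then have "\<phi> (S_act p \<theta> g (of_nat j / of_nat p)) = act g (\<phi> (of_nat j / of_nat p))"
      using \<phi>(3) that(1) by blast
    moreover have "padic_int p (\<theta> g)" "\<theta> g 1 = 1"
      using cyclotomic that(1)
      by (auto simp: cyclotomic_oriented_def p_oriented_def padic_unit_def)
    ultimately show ?thesis
      using S_act_fixes_order_p[OF p_pos, of \<theta> g j] that(2) by simp
  qed
  then show ?thesis
    using killed_by_p_eq_param by (intro exI[of _ "\<lambda>j. \<phi> (of_nat j / of_nat p)"]) auto
qed

lemma killed_by_p_fixed: "\<lbrakk>g \<in> carrier G; nsmul p z = 0\<rbrakk> \<Longrightarrow> act g z = z"
  using killed_by_p_parametrized by blast

text \<open>Counting: the p-torsion has at most p elements, and the image of iota already has p.\<close>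
lemma killed_by_p_in_image_iota:
  assumes "nsmul p z = 0"
  shows "z \<in> \<iota> ` {0..<int p}"
proof -
  obtain f :: "nat \<Rightarrow> 'm" where f: "\<forall>z. nsmul p z = 0 \<longrightarrow> (\<exists>j<p. z = f j)"
    using killed_by_p_parametrized by blast
  define B where "B = {z :: 'm. nsmul p z = 0}"
  have "B \<subseteq> f ` {..<p}" using f by (auto simp: B_def)
  then have "finite B" "card B \<le> p"
    using finite_surj card_image_le[of "{..<p}" f] card_mono[of "f ` {..<p}" B] by auto
  moreover have "\<iota> ` {0..<int p} \<subseteq> B"
    by (auto simp: B_def iota_nsmul iota_eq_0_iff)
  moreover have "card (\<iota> ` {0..<int p}) = p"
    using card_image[OF iota_inj_on] by simp
  ultimately have "\<iota> ` {0..<int p} = B" by (metis card_seteq)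
  then show ?thesis using assms by (simp add: B_def)
qed

lemma act_iota [simp]: "g \<in> carrier G \<Longrightarrow> act g (\<iota> k) = \<iota> k"
  using killed_by_p_fixed by (simp add: iota_nsmul iota_eq_0_iff)

lemma kummer_char_spec:
  assumes a: "a \<in> invariants act (carrier G)"
  shows "\<exists>x. nsmul p x = a \<and> (\<forall>g \<in> carrier G. 0 \<le> kummer_char p act \<iota> a g \<and>
           kummer_char p act \<iota> a g < int p \<and> \<iota> (kummer_char p act \<iota> a g) = act g x - x)"
proof -
  define x where "x = (SOME x. nsmul p x = a)"
  have x: "nsmul p x = a" unfolding x_def by (rule someI_ex[OF p_divisible])
  have "0 \<le> kummer_char p act \<iota> a g \<and> kummer_char p act \<iota> a g < int p \<and>
          \<iota> (kummer_char p act \<iota> a g) = act g x - x" if g: "g \<in> carrier G" for g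
  proof -
    have "nsmul p (act g x - x) = 0"
      using a g x by (simp add: nsmul_diff_right act_nsmul[symmetric] invariants_def)
    then obtain k where k: "k \<in> {0..<int p}" "act g x - x = \<iota> k"
      using killed_by_p_in_image_iota by blast
    have "(THE k. 0 \<le> k \<and> k < int p \<and> \<iota> k = act g x - x) = k"
      using k iota_inj_on by (intro the_equality) (auto simp: inj_on_def)
    then show ?thesis using k unfolding kummer_char_def Let_def x_def[symmetric] by simp
  qed
  then show ?thesis using x by blast
qed

lemma kummer_char_zmod_character_action:
  assumes a: "a \<in> invariants act (carrier G)"
  shows "zmod_character_action G p (kummer_char p act \<iota> a) act"
proof -
  let ?chi = "kummer_char p act \<iota> a"
  obtain x where x: "\<And>g. g \<in> carrier G \<Longrightarrow> 0 \<le> ?chi g \<and> ?chi g < int p \<and> \<iota> (?chi g) = act g x - x"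
    using kummer_char_spec[OF a] by blast
  have "?chi (g \<otimes> h) = (?chi g + ?chi h) mod int p" if g: "g \<in> carrier G" and h: "h \<in> carrier G" for g h
  proof -
    have "act h x = x + \<iota> (?chi h)" "act g x = x + \<iota> (?chi g)" using x g h by (simp_all add: algebra_simps)
    then have "\<iota> (?chi (g \<otimes> h)) = \<iota> ((?chi g + ?chi h) mod int p)"
      using x[of "g \<otimes> h"] g h by (simp add: act_mult act_add iota_add iota_mod)
    moreover have "?chi (g \<otimes> h) \<in> {0..<int p}" "(?chi g + ?chi h) mod int p \<in> {0..<int p}"
      using x[of "g \<otimes> h"] g h p_gt_1 by auto
    ultimately show ?thesis by (rule inj_onD[OF iota_inj_on])
  qed
  then show ?thesis
    using x by unfold_locales auto
qed

lemma kummer_kernel_open_subgroup: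
  assumes a: "a \<in> invariants act (carrier G)"
  shows "open_subgroup G T (kummer_kernel G p act \<iota> a)"
proof -
  interpret zmod_character_action G p "kummer_char p act \<iota> a" act
    by (rule kummer_char_zmod_character_action[OF a])
  obtain x where x: "\<And>g. g \<in> carrier G \<Longrightarrow> 0 \<le> kummer_char p act \<iota> a g \<and>
      kummer_char p act \<iota> a g < int p \<and> \<iota> (kummer_char p act \<iota> a g) = act g x - x"
    using kummer_char_spec[OF a] by blast
  have "kummer_char p act \<iota> a g = 0 \<longleftrightarrow> act g x = x" if g: "g \<in> carrier G" for g
    using x[OF g] zdvd_not_zless[of "kummer_char p act \<iota> a g" "int p"]
    by (auto simp: iota_eq_0_iff[symmetric] order_le_less)
  then have "kummer_kernel G p act \<iota> a = {g \<in> carrier G. act g x = x}"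
    by (auto simp: kummer_kernel_def)
  then show ?thesis
    using chi_kernel_subgroup stabilizer_open
    by (simp add: open_subgroup_def kummer_kernel_def chi_kernel_def)
qed

lemma Zp_hom_coboundary:
  assumes H: "open_subgroup G T H"
    and lc: "locally_constant_on T (carrier G) (\<lambda>g. c g mod int p)"
    and hom: "\<And>g h. \<lbrakk>g \<in> H; h \<in> H\<rbrakk> \<Longrightarrow> int p dvd c (g \<otimes> h) - (c g + c h)"
  shows "\<exists>m. \<forall>h \<in> H. \<iota> (c h) = act h m - m"
proof -
  have H_sub: "H \<subseteq> carrier G" and H_open: "openin T H"
    using H by (auto simp: open_subgroup_def subgroup_def)
  have "locally_constant_on T H (\<lambda>g. \<iota> (c g))"
    unfolding locally_constant_on_def
  proof
    fix y
    have "{g \<in> H. \<iota> (c g) = y} = H \<inter> (\<Union>r \<in> {r. \<iota> r = y}. {g \<in> carrier G. c g mod int p = r})"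
      using H_sub iota_mod by auto
    moreover have "openin T {g \<in> carrier G. c g mod int p = r}" for r
      using lc by (simp add: locally_constant_on_def)
    then have "openin T (\<Union>r \<in> {r. \<iota> r = y}. {g \<in> carrier G. c g mod int p = r})"
      by (blast intro: openin_Union)
    ultimately show "openin T {g \<in> H. \<iota> (c g) = y}"
      using openin_Int[OF H_open] by simp
  qed
  moreover have "\<iota> (c (g \<otimes> h)) = \<iota> (c g) + act g (\<iota> (c h))" if "g \<in> H" "h \<in> H" for g h
    using hom[OF that] that H_sub by (auto simp: iota_eq_iff iota_add[symmetric])
  moreover have "H1_vanishes G T act H"
    using H hilbert90 by (simp add: hilbert90_module_def)
  ultimately show ?thesis
    unfolding H1_vanishes_def by (elim allE[of _ "\<lambda>g. \<iota> (c g)"]) blast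
qed

lemma carry_coboundary:
  assumes chi: "zmod_character G p chi" and psi: "zmod_character G p psi"
    and y: "nsmul p y = b" "\<And>g. g \<in> carrier G \<Longrightarrow> act g y = y + \<iota> (psi g)"
    and cup: "\<And>g h. \<lbrakk>g \<in> carrier G; h \<in> carrier G\<rbrakk> \<Longrightarrow>
                (chi g * psi h) mod int p = (c h - c (g \<otimes> h) + c g) mod int p"
    and W: "\<And>g. W g = nsmul (nat (chi g)) y + \<iota> (c g + chi g * psi g) - (act g m - m)"
    and g: "g \<in> carrier G" and h: "h \<in> carrier G"
  shows "W (g \<otimes> h) = act g (W h) + W g - (if int p \<le> chi g + chi h then b else 0)"
proof -
  interpret chi: zmod_character G p chi by (rule chi)
  interpret psi: zmod_character G p psi by (rule psi)
  have "int (nat (chi h)) = chi h" using chi.chi_range[OF h] by simp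
  then have act_W: "act g (W h) = nsmul (nat (chi h)) y + \<iota> (chi h * psi g)
                       + \<iota> (c h + chi h * psi h) - (act (g \<otimes> h) m - act g m)"
    using g h by (simp add: W act_diff act_add act_nsmul y(2) nsmul_add_right iota_nsmul act_mult)
  have "nsmul (nat (chi (g \<otimes> h))) y
          = nsmul (nat (chi g)) y + nsmul (nat (chi h)) y - (if int p \<le> chi g + chi h then b else 0)"
    using chi.nsmul_chi_mult[OF g h, of y] y(1) by (simp add: eq_diff_eq)
  moreover have "\<iota> (c (g \<otimes> h) + chi (g \<otimes> h) * psi (g \<otimes> h))
          = \<iota> (chi h * psi g) + \<iota> (c h + chi h * psi h) + \<iota> (c g + chi g * psi g)"
    using dvd_cup_coboundary[OF chi.chi_mult[OF g h] psi.chi_mult[OF g h] cup[OF g h]]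
    by (simp add: iota_eq_iff iota_add[symmetric] add.assoc)
  ultimately show ?thesis
    unfolding W[of "g \<otimes> h"] W[of g] act_W by (simp add: algebra_simps)
qed

lemma carry_trivialization_exists:
  assumes a: "a \<in> invariants act (carrier G)" and b: "b \<in> invariants act (carrier G)"
    and cup: "cup_vanishes G T p (kummer_char p act \<iota> a) (kummer_char p act \<iota> b)"
  shows "\<exists>W. carry_trivialization G p (kummer_char p act \<iota> a) act W b"
proof -
  let ?chi = "kummer_char p act \<iota> a" and ?psi = "kummer_char p act \<iota> b"
  have chi: "zmod_character G p ?chi" and psi: "zmod_character G p ?psi"
    using kummer_char_zmod_character_action[OF a] kummer_char_zmod_character_action[OF b]
    by (simp_all add: zmod_character_action.axioms(1))
  obtain y where "nsmul p y = b" "\<forall>g \<in> carrier G. \<iota> (?psi g) = act g y - y"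
    using kummer_char_spec[OF b] by blast
  then have y: "nsmul p y = b" "\<And>g. g \<in> carrier G \<Longrightarrow> act g y = y + \<iota> (?psi g)"
    by (simp_all add: algebra_simps)
  obtain c where lc: "locally_constant_on T (carrier G) (\<lambda>g. c g mod int p)"
    and rel: "\<And>g h. \<lbrakk>g \<in> carrier G; h \<in> carrier G\<rbrakk> \<Longrightarrow>
                (?chi g * ?psi h) mod int p = (c h - c (g \<otimes> h) + c g) mod int p"
    using cup unfolding cup_vanishes_def by blast
  have "int p dvd c (g \<otimes> h) - (c g + c h)" if "g \<in> kummer_kernel G p act \<iota> a" "h \<in> kummer_kernel G p act \<iota> a" for g h
  proof -
    have "int p dvd c h - c (g \<otimes> h) + c g"
      using rel[of g h] that by (auto simp: kummer_kernel_def mod_eq_0_iff_dvd)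
    moreover have "c (g \<otimes> h) - (c g + c h) = - (c h - c (g \<otimes> h) + c g)" by simp
    ultimately show ?thesis by (simp only: dvd_minus_iff)
  qed
  then obtain m where m: "\<And>h. h \<in> kummer_kernel G p act \<iota> a \<Longrightarrow> \<iota> (c h) = act h m - m"
    using Zp_hom_coboundary[OF kummer_kernel_open_subgroup[OF a] lc] by blast
  define W where "W g = nsmul (nat (?chi g)) y + \<iota> (c g + ?chi g * ?psi g) - (act g m - m)" for g
  have "W h = 0" if "h \<in> carrier G" "?chi h = 0" for h
    using m[of h] that by (simp add: W_def kummer_kernel_def)
  moreover have "W (g \<otimes> h) = act g (W h) + W g - (if int p \<le> ?chi g + ?chi h then b else 0)"
    if "g \<in> carrier G" "h \<in> carrier G" for g h
    by (rule carry_coboundary[OF chi psi y rel W_def that])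
  ultimately show ?thesis unfolding carry_trivialization_def by blast
qed

end

theorem corollary3p3:
  fixes G :: "'g monoid" and T :: "'g topology" and p :: nat
    and \<theta> :: "'g \<Rightarrow> nat \<Rightarrow> int"
    and act :: "'g \<Rightarrow> 'm::ab_group_add \<Rightarrow> 'm" and \<iota> :: "int \<Rightarrow> 'm"
    and a b :: 'm
  assumes "cyclotomic_oriented G T p \<theta>"
    and "hilbert90_module G T p \<theta> act"
    and "inj_hom_Zp p \<iota>"
    and "a \<in> invariants act (carrier G)"
    and "b \<in> invariants act (carrier G)"
    and "cup_vanishes G T p (kummer_char p act \<iota> a) (kummer_char p act \<iota> b)"
  shows "\<exists>\<alpha> \<in> invariants act (kummer_kernel G p act \<iota> a).
           norm_map G (kummer_kernel G p act \<iota> a) act \<alpha> = b"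
proof -
  interpret cyclotomic_hilbert90 G T p \<theta> act \<iota>
    using assms(1-3) by unfold_locales
  interpret \<chi>: zmod_character_action G p "kummer_char p act \<iota> a" act
    by (rule kummer_char_zmod_character_action[OF assms(4)])
  have kernel: "kummer_kernel G p act \<iota> a = \<chi>.chi_kernel"
    by (simp add: kummer_kernel_def \<chi>.chi_kernel_def)
  show ?thesis
  proof (cases "\<exists>g \<in> carrier G. kummer_char p act \<iota> a g \<noteq> 0")
    case True
    then obtain \<sigma> where \<sigma>: "\<sigma> \<in> carrier G" "kummer_char p act \<iota> a \<sigma> = 1"
      using \<chi>.exists_chi_eq_one[OF prime_p] by blast
    obtain W where W: "carry_trivialization G p (kummer_char p act \<iota> a) act W b"
      using carry_trivialization_exists assms(4-6) by blast
    show ?thesis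
      unfolding kernel
      using \<chi>.carry_trivialization_invariant[OF W \<sigma>(1)] \<chi>.norm_map_chi_kernel[OF \<sigma>]
        \<chi>.norm_of_carry_trivialization[OF W \<sigma>] by auto
  next
    case False
    then have "kummer_kernel G p act \<iota> a = carrier G" by (auto simp: kummer_kernel_def)
    then show ?thesis using norm_map_carrier[OF assms(5)] assms(5) by auto
  qed
qed

end
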